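(* Let $n\geq 2$ be an integer and let $f:\mathbb{R}\to\mathbb{R}$ be the continuous function which equals $1$ on $[\frac{1}{n},1-\frac{1}{n}]$, equals $-1$ on $[-1+\frac{1}{n},-\frac{1}{n}]$, equals $0$ for $|t|\geq 1$, and is linear on each of the intervals $[-1,-1+\frac{1}{n}]$, $[-\frac{1}{n},\frac{1}{n}]$ and $[1-\frac{1}{n},1]$. For a positive integer $k$ let $\phi_k(x)=c_k\left(1-\frac{x^2}{4}\right)^{k^2}$, where $c_k>0$ is chosen so that $\int_{-2}^2\phi_k(x)\,dx=1$, and let $P_k(t)=\int_{-1}^1 f(x)\phi_k(t-x)\,dx$ for $t\in\mathbb{R}$. Then: (i) $P_k$ is an odd polynomial of degree $2k^2-1$ with leading coefficient $$a_k=(-1)^{k^2+1}\frac{2c_k k^2}{4^{k^2}}\Big(1-\frac{1}{n}\Big),$$ i.e. $P_k(t)=a_k t^{2k^2-1}+(\text{lower order terms})$. (ii) There is an absolute constant $c>0$ (independent of $k$ and $n$) such that for all $t\in\mathbb{R}$, $$|P_k^{(2k^2-1)}(t)|\geq c\,(2k^2-1)!\,\frac{k^3}{4^{k^2}}.$$ (iii) For every $t\in[-1,1]$, $$P_k(t)=\int_0^2 \big(f(t+x)+f(t-x)\big)\phi_k(x)\,dx.$$ *)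

theory Defs
  imports "HOL-Analysis.Analysis" "HOL-Computational_Algebra.Polynomial"
begin

definition f_fun :: "nat \<Rightarrow> real \<Rightarrow> real" where
  "f_fun n t =
     (if \<bar>t\<bar> \<ge> 1 then 0
      else if t \<ge> 1 - 1 / real n then real n * (1 - t)
      else if t \<ge> 1 / real n then 1
      else if t \<ge> - 1 / real n then real n * t
      else if t \<ge> -1 + 1 / real n then -1
      else - real n * (1 + t))"

definition c_const :: "nat \<Rightarrow> real" where
  "c_const k = 1 / integral {-2..2} (\<lambda>x::real. (1 - x^2 / 4) ^ (k^2))"

definition phi :: "nat \<Rightarrow> real \<Rightarrow> real" where
  "phi k x = c_const k * (1 - x^2 / 4) ^ (k^2)"

definition P_fun :: "nat \<Rightarrow> nat \<Rightarrow> real \<Rightarrow> real" where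
  "P_fun n k t = integral {-1..1} (\<lambda>x. f_fun n x * phi k (t - x))"

definition a_coeff :: "nat \<Rightarrow> nat \<Rightarrow> real" where
  "a_coeff n k = (-1) ^ (k^2 + 1) * (2 * c_const k * real (k^2) / 4 ^ (k^2)) * (1 - 1 / real n)"

end

theory Submission
  imports Defs
begin

(*
  Expanding phi_k (t - x) binomially shows that P_k is a polynomial in t whose coefficients
  are moments of f. As f is odd, its zeroth moment vanishes, which kills the t^(2k^2) term;
  the coefficient of t^(2k^2 - 1) is then 2k^2 * c_k (-1/4)^(k^2) * (- int x f(x) dx), and
  int x f(x) dx = 1 - 1/n. For (ii), Bernoulli's inequality gives
  (1 - x^2/4)^(k^2) <= 1 / (1 + k^2 x^2/4), whose integral over [-2,2] is at most 2 pi / k,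
  so c_k >= k / (2 pi). Part (iii) is the substitution x |-> t - x, using that f vanishes
  outside [-1,1] and phi_k is even.
*)

lemma has_integral_by_antiderivative:
  fixes a b :: real
  assumes "a \<le> b" "\<And>x. x \<in> {a..b} \<Longrightarrow> g x = h x"
    "\<And>x. (F has_real_derivative h x) (at x)"
  shows "(g has_integral (F b - F a)) {a..b}"
proof -
  have "(h has_integral (F b - F a)) {a..b}"
    using assms(1,3)
    by (intro fundamental_theorem_of_calculus)
       (auto simp: has_real_derivative_iff_has_vector_derivative[symmetric]
             intro: has_field_derivative_at_within)
  then show ?thesis using has_integral_cong[of "{a..b}" g h] assms(2) by simp
qed

lemma integral_symmetric_interval:
  fixes u :: "real \<Rightarrow> 'a::banach"
  assumes "u integrable_on {-a..a}" "0 \<le> a"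
  shows "integral {-a..a} u = integral {0..a} (\<lambda>x. u x + u (-x))"
proof -
  have left: "u integrable_on {-a..0}" and right: "u integrable_on {0..a}"
    using assms(2) by (auto intro: integrable_subinterval_real[OF assms(1)])
  have "integral {-a..a} u = integral {-a..0} u + integral {0..a} u"
    using Henstock_Kurzweil_Integration.integral_combine[OF _ _ assms(1), of 0] assms(2) by simp
  also have "integral {-a..0} u = integral {0..a} (\<lambda>x. u (-x))"
    using Henstock_Kurzweil_Integration.integral_reflect_real[of a 0 "\<lambda>x. u (-x)"] by simp
  also have "\<dots> + integral {0..a} u = integral {0..a} (\<lambda>x. u x + u (-x))"
    using left right
      Henstock_Kurzweil_Integration.integrable_reflect_real[where f=u and a="-a" and b=0]
    by (simp add: integral_add add.commute)
  finally show ?thesis .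
qed

definition poly_convolution :: "(real \<Rightarrow> real) \<Rightarrow> real set \<Rightarrow> real poly \<Rightarrow> real poly" where
  "poly_convolution f S Q =
     (\<Sum>m\<le>degree Q. \<Sum>j\<le>m.
        monom (coeff Q m * of_nat (m choose j) * integral S (\<lambda>x. f x * (-x)^(m-j))) j)"

lemma poly_poly_convolution:
  assumes "continuous_on {a..b} f"
  shows "poly (poly_convolution f {a..b} Q) t = integral {a..b} (\<lambda>x. f x * poly Q (t - x))"
proof -
  have integrable: "(\<lambda>x. c * (f x * (-x)^i)) integrable_on {a..b}" for c i
    using assms by (intro integrable_continuous_interval continuous_intros)
  have "integral {a..b} (\<lambda>x. f x * poly Q (t - x))
      = integral {a..b} (\<lambda>x. \<Sum>m\<le>degree Q. \<Sum>j\<le>m.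
          (coeff Q m * of_nat (m choose j) * t^j) * (f x * (-x)^(m-j)))"
  proof (rule integral_cong)
    fix x
    have "poly Q (t - x)
        = (\<Sum>m\<le>degree Q. coeff Q m * (\<Sum>j\<le>m. of_nat (m choose j) * t^j * (-x)^(m-j)))"
      unfolding poly_altdef binomial_ring[symmetric] by simp
    then show "f x * poly Q (t - x) = (\<Sum>m\<le>degree Q. \<Sum>j\<le>m.
          (coeff Q m * of_nat (m choose j) * t^j) * (f x * (-x)^(m-j)))"
      by (simp add: sum_distrib_left mult_ac)
  qed
  also have "\<dots> = (\<Sum>m\<le>degree Q. \<Sum>j\<le>m.
      coeff Q m * of_nat (m choose j) * t^j * integral {a..b} (\<lambda>x. f x * (-x)^(m-j)))"
    using integrable by (simp add: integral_sum integrable_sum)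
  also have "\<dots> = poly (poly_convolution f {a..b} Q) t"
    by (simp add: poly_convolution_def poly_sum poly_monom mult_ac)
  finally show ?thesis by simp
qed

lemma coeff_poly_convolution:
  "coeff (poly_convolution f S Q) i =
     (\<Sum>m\<le>degree Q. if i \<le> m
        then coeff Q m * of_nat (m choose i) * integral S (\<lambda>x. f x * (-x)^(m-i)) else 0)"
  by (simp add: poly_convolution_def coeff_sum coeff_monom)

lemma degree_poly_convolution_le:
  assumes "integral S f = 0"
  shows "degree (poly_convolution f S Q) \<le> degree Q - 1"
proof (rule degree_le, intro allI impI)
  fix i assume "degree Q - 1 < i"
  then have "m \<le> degree Q \<Longrightarrow> i \<le> m \<Longrightarrow> m = i" for m by linarith
  then show "coeff (poly_convolution f S Q) i = 0"
    using assms by (auto simp: coeff_poly_convolution intro!: sum.neutral)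
qed

lemma coeff_poly_convolution_degree_pred:
  assumes "integral S f = 0" "degree Q \<ge> 1"
  shows "coeff (poly_convolution f S Q) (degree Q - 1)
       = of_nat (degree Q) * lead_coeff Q * integral S (\<lambda>x. f x * (-x))"
proof -
  define d where "d = degree Q"
  have "d - (d - 1) = 1" using assms(2) by (simp add: d_def)
  moreover have "d choose (d - 1) = d"
    using \<open>d - (d - 1) = 1\<close> by (subst binomial_symmetric) auto
  ultimately have "coeff (poly_convolution f S Q) (d - 1)
      = (\<Sum>m\<le>d. if m = d then of_nat d * lead_coeff Q * integral S (\<lambda>x. f x * (-x)) else 0)"
    unfolding coeff_poly_convolution d_def[symmetric]
    using assms(1) by (intro sum.cong) (auto simp: d_def le_Suc_eq)
  then show ?thesis by (simp add: d_def)
qed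

lemma higher_deriv_poly_degree:
  "(deriv ^^ degree p) (poly p) t = fact (degree p) * lead_coeff p"
proof -
  have deriv_poly: "deriv (poly q) = poly (pderiv q)" for q :: "'a::real_normed_field poly"
    by (rule ext, rule DERIV_imp_deriv, rule poly_DERIV)
  have "(deriv ^^ m) (poly q) = poly ((pderiv ^^ m) q)" for m and q :: "'a poly"
    by (induction m) (simp_all add: deriv_poly)
  moreover have "(pderiv ^^ degree p) p = [:fact (degree p) * lead_coeff p:]"
  proof (rule poly_eqI)
    show "coeff ((pderiv ^^ degree p) p) i = coeff [:fact (degree p) * lead_coeff p:] i" for i
      by (cases i) (simp_all add: coeff_higher_pderiv pochhammer_fact coeff_eq_0)
  qed
  ultimately show ?thesis by simp
qed

definition clipped_tent :: "real \<Rightarrow> real \<Rightarrow> real" where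
  "clipped_tent N t = max 0 (min 1 (min (N * t) (N * (1 - t))))"

lemma f_fun_eq_clipped_tent_diff:
  assumes "n \<ge> 2"
  shows "f_fun n t = clipped_tent n t - clipped_tent n (-t)"
proof -
  define N where "N = real n"
  have N: "N \<ge> 2" using assms by (simp add: N_def)
  define s where "s = N * t"
  have "\<bar>s\<bar> = N * \<bar>t\<bar>" using N by (simp add: s_def abs_mult)
  then have e1: "(1 \<le> \<bar>t\<bar>) = (N \<le> \<bar>s\<bar>)" using N by simp
  have e2: "(1 - 1 / N \<le> t) = (N - 1 \<le> s)" "(1 / N \<le> t) = (1 \<le> s)"
    "(- 1 / N \<le> t) = (- 1 \<le> s)" "(- 1 + 1 / N \<le> t) = (1 - N \<le> s)"
    using N by (simp_all add: s_def field_simps)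
  have e3: "N * (1 - t) = N - s" "N * t = s" "- N * (1 + t) = - N - s" "N * (-t) = - s"
    "N * (1 - - t) = N + s" by (simp_all add: s_def algebra_simps)
  show ?thesis
    unfolding f_fun_def clipped_tent_def N_def[symmetric] e1 e2 e3 using N
    by (auto simp: abs_if max_def min_def split: if_splits)
qed

lemma f_fun_odd: "n \<ge> 2 \<Longrightarrow> f_fun n (-t) = - f_fun n t"
  by (simp add: f_fun_eq_clipped_tent_diff)

lemma continuous_on_f_fun: "n \<ge> 2 \<Longrightarrow> continuous_on S (f_fun n)"
proof -
  assume "n \<ge> 2"
  then have "f_fun n = (\<lambda>t. clipped_tent n t - clipped_tent n (-t))"
    by (simp add: f_fun_eq_clipped_tent_diff fun_eq_iff)
  then show ?thesis unfolding clipped_tent_def by (simp add: continuous_intros)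
qed

lemma f_fun_eq_0: "\<bar>t\<bar> \<ge> 1 \<Longrightarrow> f_fun n t = 0"
  by (simp add: f_fun_def)

lemma clipped_tent_nonpos: "0 \<le> N \<Longrightarrow> t \<le> 0 \<Longrightarrow> clipped_tent N t = 0"
  using mult_nonneg_nonpos[of N t] by (simp add: clipped_tent_def)

lemma f_fun_eq_clipped_tent:
  "n \<ge> 2 \<Longrightarrow> 0 \<le> t \<Longrightarrow> f_fun n t = clipped_tent n t"
  by (simp add: f_fun_eq_clipped_tent_diff clipped_tent_nonpos)

lemma has_integral_clipped_tent_times_id:
  fixes N :: real
  assumes N: "N \<ge> 2"
  shows "((\<lambda>x. clipped_tent N x * x) has_integral (1/2 - 1 / (2 * N))) {0..1}"
proof -
  have bounds: "0 \<le> 1 / N" "1 / N \<le> 1 - 1 / N" "1 - 1 / N \<le> 1"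
    using N by (auto simp: field_simps)
  have rising: "((\<lambda>x. clipped_tent N x * x) has_integral
      ((\<lambda>x. N * x^3 / 3) (1 / N) - (\<lambda>x. N * x^3 / 3) 0)) {0..1 / N}"
  proof (rule has_integral_by_antiderivative)
    fix x assume "x \<in> {0..1 / N}"
    then have "0 \<le> N * x" "N * x \<le> 1" "1 \<le> N * (1 - x)" using N by (auto simp: field_simps)
    then show "clipped_tent N x * x = N * x * x" by (simp add: clipped_tent_def)
  qed (use bounds in \<open>auto intro!: derivative_eq_intros simp: power2_eq_square\<close>)
  have plateau: "((\<lambda>x. clipped_tent N x * x) has_integral
      ((\<lambda>x. x^2 / 2) (1 - 1 / N) - (\<lambda>x. x^2 / 2) (1 / N))) {1 / N..1 - 1 / N}"
  proof (rule has_integral_by_antiderivative)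
    fix x assume "x \<in> {1 / N..1 - 1 / N}"
    then have "1 \<le> N * x" "1 \<le> N * (1 - x)" using N by (auto simp: field_simps)
    then show "clipped_tent N x * x = x" by (simp add: clipped_tent_def)
  qed (use bounds in \<open>auto intro!: derivative_eq_intros\<close>)
  have falling: "((\<lambda>x. clipped_tent N x * x) has_integral
      ((\<lambda>x. N * (x^2 / 2 - x^3 / 3)) 1 - (\<lambda>x. N * (x^2 / 2 - x^3 / 3)) (1 - 1 / N)))
      {1 - 1 / N..1}"
  proof (rule has_integral_by_antiderivative)
    fix x assume "x \<in> {1 - 1 / N..1}"
    then have "0 \<le> N * (1 - x)" "N * (1 - x) \<le> 1" "1 \<le> N * x"
      using N by (auto simp: field_simps)
    then show "clipped_tent N x * x = N * (1 - x) * x" by (simp add: clipped_tent_def)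
  qed (use bounds in \<open>auto intro!: derivative_eq_intros simp: power2_eq_square algebra_simps\<close>)
  have "((\<lambda>x. clipped_tent N x * x) has_integral
      ((\<lambda>x. N * x^3 / 3) (1 / N) - (\<lambda>x. N * x^3 / 3) 0
       + ((\<lambda>x. x^2 / 2) (1 - 1 / N) - (\<lambda>x. x^2 / 2) (1 / N))
       + ((\<lambda>x. N * (x^2 / 2 - x^3 / 3)) 1 - (\<lambda>x. N * (x^2 / 2 - x^3 / 3)) (1 - 1 / N)))) {0..1}"
    using bounds
    by (intro has_integral_combine[OF _ _ has_integral_combine[OF _ _ rising plateau] falling]) auto
  moreover have "(\<lambda>x. N * x^3 / 3) (1 / N) - (\<lambda>x. N * x^3 / 3) 0
       + ((\<lambda>x. x^2 / 2) (1 - 1 / N) - (\<lambda>x. x^2 / 2) (1 / N))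
       + ((\<lambda>x. N * (x^2 / 2 - x^3 / 3)) 1 - (\<lambda>x. N * (x^2 / 2 - x^3 / 3)) (1 - 1 / N))
      = 1/2 - 1 / (2 * N)"
    using N by (simp add: field_simps power3_eq_cube power2_eq_square)
  ultimately show ?thesis by simp
qed

lemma integral_f_fun: "n \<ge> 2 \<Longrightarrow> integral {-1..1} (f_fun n) = 0"
  by (simp add: integral_symmetric_interval integrable_continuous_interval
      continuous_on_f_fun f_fun_odd)

lemma integral_f_fun_times_id:
  assumes n: "n \<ge> 2"
  shows "integral {-1..1} (\<lambda>x. f_fun n x * x) = 1 - 1 / real n"
proof -
  have "integral {-1..1} (\<lambda>x. f_fun n x * x) = integral {0..1} (\<lambda>x. 2 * (clipped_tent n x * x))"
    using n by (simp add: integral_symmetric_interval integrable_continuous_interval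
        continuous_on_f_fun continuous_intros f_fun_odd)
      (rule integral_cong, simp add: f_fun_eq_clipped_tent)
  also have "\<dots> = 2 * (1/2 - 1 / (2 * real n))"
    using integral_unique[OF has_integral_clipped_tent_times_id, of n] n by simp
  also have "\<dots> = 1 - 1 / real n" by (simp add: algebra_simps)
  finally show ?thesis .
qed

lemma integral_bump_pos: "0 < integral {-2..2} (\<lambda>x::real. (1 - x^2 / 4) ^ m)"
proof -
  let ?g = "\<lambda>x::real. (1 - x^2 / 4) ^ m"
  have integrable: "?g integrable_on {a..b}" for a b
    by (intro integrable_continuous_interval continuous_intros) auto
  have "0 < integral {-1..1} (\<lambda>x::real. (3/4::real) ^ m)" by simp
  also have "\<dots> \<le> integral {-1..1} ?g"
  proof (rule integral_le[OF _ integrable])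
    fix x :: real assume "x \<in> {-1..1}"
    then have "x^2 \<le> 1" by (auto simp: abs_square_le_1)
    then show "(3/4::real) ^ m \<le> ?g x" by (intro power_mono) auto
  qed (rule integrable_const_ivl)
  also have "\<dots> \<le> integral {-2..2} ?g"
  proof (rule integral_subset_le[OF _ integrable integrable], simp, intro ballI)
    fix x :: real assume "x \<in> {-2..2}"
    then have "x^2 \<le> 2^2" by (intro abs_le_square_iff[THEN iffD1]) auto
    then show "0 \<le> ?g x" by simp
  qed
  finally show ?thesis .
qed

lemma bump_le_lorentzian:
  fixes x :: real
  assumes "\<bar>x\<bar> \<le> 2"
  shows "(1 - x^2 / 4) ^ m \<le> 1 / (1 + real m * (x^2 / 4))"
proof -
  define u where "u = x^2 / 4"
  have "x^2 \<le> 2^2" using assms by (intro abs_le_square_iff[THEN iffD1]) auto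
  then have u: "0 \<le> u" "u \<le> 1" by (auto simp: u_def)
  have "(1 - u) ^ m * (1 + real m * u) \<le> (1 - u) ^ m * (1 + u) ^ m"
    using Bernoulli_inequality[of u m] u by (intro mult_left_mono) auto
  also have "\<dots> = (1 - u^2) ^ m"
    by (simp add: power_mult_distrib[symmetric] power2_eq_square algebra_simps)
  also have "\<dots> \<le> 1" using u by (intro power_le_one) (auto simp: power2_eq_square mult_le_one)
  finally have "(1 - u) ^ m * (1 + real m * u) \<le> 1" .
  moreover have "0 < 1 + real m * u" using u by (simp add: add_pos_nonneg)
  ultimately show ?thesis by (simp add: u_def[symmetric] le_divide_eq)
qed

lemma integral_lorentzian_le:
  fixes s :: real
  assumes "0 < s"
  shows "integral {-2..2} (\<lambda>x. 1 / (1 + (s * x / 2)^2)) \<le> 2 * pi / s"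
proof -
  let ?F = "\<lambda>x. 2 / s * arctan (s * x / 2)"
  have "((\<lambda>x. 1 / (1 + (s * x / 2)^2)) has_integral (?F 2 - ?F (-2))) {-2..2}"
  proof (rule has_integral_by_antiderivative)
    fix x :: real
    have "0 < 1 + (s * x / 2)^2" by (simp add: add_pos_nonneg)
    then show "(?F has_real_derivative 1 / (1 + (s * x / 2)^2)) (at x)"
      using assms by (auto intro!: derivative_eq_intros simp: divide_simps)
  qed auto
  then have "integral {-2..2} (\<lambda>x. 1 / (1 + (s * x / 2)^2)) = 2 / s * (arctan s - arctan (- s))"
    by (simp add: integral_unique algebra_simps)
  also have "\<dots> \<le> 2 / s * pi"
    using arctan_ubound[of s] arctan_lbound[of "- s"] assms by (intro mult_left_mono) auto
  finally show ?thesis by simp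
qed

lemma c_const_pos: "0 < c_const k"
  using integral_bump_pos[of "k^2"] by (simp add: c_const_def)

lemma c_const_ge:
  assumes "k \<ge> 1"
  shows "real k / (2 * pi) \<le> c_const k"
proof -
  have "(1 - x^2 / 4) ^ (k^2) \<le> 1 / (1 + (real k * x / 2)^2)" if "x \<in> {-2..2}" for x :: real
    using bump_le_lorentzian[of x "k^2"] that
    by (simp add: abs_le_iff power_mult_distrib power_divide)
  moreover have "0 < 1 + (real k * x / 2)^2" for x :: real by (simp add: add_pos_nonneg)
  ultimately have "integral {-2..2} (\<lambda>x::real. (1 - x^2 / 4) ^ (k^2))
      \<le> integral {-2..2} (\<lambda>x. 1 / (1 + (real k * x / 2)^2))"
    by (intro integral_le integrable_continuous_interval continuous_intros)
      (auto simp: less_imp_neq[symmetric])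
  also have "\<dots> \<le> 2 * pi / real k" using assms by (intro integral_lorentzian_le) auto
  finally have "integral {-2..2} (\<lambda>x::real. (1 - x^2 / 4) ^ (k^2)) \<le> 2 * pi / real k" .
  then show ?thesis
    using integral_bump_pos[of "k^2"] assms unfolding c_const_def
    by (simp add: divide_simps mult.commute)
qed

definition phi_poly :: "nat \<Rightarrow> real poly" where
  "phi_poly k = smult (c_const k) ([:1, 0, -1/4:] ^ k^2)"

lemma poly_phi_poly: "poly (phi_poly k) = phi k"
  by (simp add: fun_eq_iff phi_poly_def phi_def power2_eq_square)

lemma degree_phi_poly: "degree (phi_poly k) = 2 * k^2"
  using c_const_pos[of k] by (simp add: phi_poly_def degree_power_eq)

lemma lead_coeff_phi_poly: "lead_coeff (phi_poly k) = c_const k * (-1/4) ^ k^2"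
proof -
  have deg: "degree ([:1, 0, -1/4::real:] ^ k^2) = 2 * k^2" by (simp add: degree_power_eq)
  then have "coeff ([:1, 0, -1/4::real:] ^ k^2) (2 * k^2) = lead_coeff [:1, 0, -1/4::real:] ^ k^2"
    by (metis lead_coeff_power)
  then show ?thesis using deg by (simp add: degree_phi_poly phi_poly_def)
qed

lemma phi_even: "phi k (-x) = phi k x"
  by (simp add: phi_def)

lemma continuous_on_phi: "continuous_on S (phi k)"
  unfolding phi_def by (intro continuous_intros) auto

definition P_poly :: "nat \<Rightarrow> nat \<Rightarrow> real poly" where
  "P_poly n k = poly_convolution (f_fun n) {-1..1} (phi_poly k)"

lemma poly_P_poly: "n \<ge> 2 \<Longrightarrow> poly (P_poly n k) t = P_fun n k t"
  by (simp add: P_poly_def P_fun_def poly_poly_convolution continuous_on_f_fun poly_phi_poly)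

lemma coeff_P_poly_top:
  assumes "n \<ge> 2" "k \<ge> 1"
  shows "coeff (P_poly n k) (2 * k^2 - 1) = a_coeff n k"
proof -
  have "coeff (P_poly n k) (2 * k^2 - 1)
      = real (2 * k^2) * (c_const k * (-1/4) ^ k^2) * (- (1 - 1 / real n))"
    using assms
      coeff_poly_convolution_degree_pred[where f="f_fun n" and S="{-1..1}" and Q="phi_poly k"]
    by (simp add: P_poly_def degree_phi_poly lead_coeff_phi_poly[unfolded degree_phi_poly]
        integral_f_fun integral_f_fun_times_id)
  also have "\<dots> = a_coeff n k"
    by (simp add: a_coeff_def power_minus' power_divide field_simps)
  finally show ?thesis .
qed

lemma a_coeff_nonzero: "n \<ge> 2 \<Longrightarrow> k \<ge> 1 \<Longrightarrow> a_coeff n k \<noteq> 0"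
  using c_const_pos[of k] by (simp add: a_coeff_def)

lemma degree_P_poly: "n \<ge> 2 \<Longrightarrow> k \<ge> 1 \<Longrightarrow> degree (P_poly n k) = 2 * k^2 - 1"
  using degree_poly_convolution_le[where f="f_fun n" and S="{-1..1}" and Q="phi_poly k"]
    le_degree[of "P_poly n k" "2 * k^2 - 1"] coeff_P_poly_top a_coeff_nonzero
  by (force simp: P_poly_def degree_phi_poly integral_f_fun)

lemma P_fun_odd:
  assumes "n \<ge> 2"
  shows "P_fun n k (-t) = - P_fun n k t"
proof -
  have "P_fun n k (-t) = integral {-1..1} (\<lambda>x. f_fun n (-x) * phi k (-t - (-x)))"
    unfolding P_fun_def
    using Henstock_Kurzweil_Integration.integral_reflect_real
      [of 1 "-1" "\<lambda>x. f_fun n x * phi k (-t - x)"]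
    by simp
  also have "\<dots> = - P_fun n k t"
    using phi_even[of k "t - x" for x] assms by (simp add: P_fun_def f_fun_odd algebra_simps)
  finally show ?thesis .
qed

lemma P_fun_symmetric_form:
  assumes n: "n \<ge> 2" and t: "t \<in> {-1..1}"
  shows "P_fun n k t = integral {0..2} (\<lambda>x. (f_fun n (t + x) + f_fun n (t - x)) * phi k x)"
proof -
  define h where "h x = f_fun n x * phi k (t - x)" for x
  have "(h has_integral P_fun n k t) {-1..1}"
    using n unfolding P_fun_def h_def
    by (intro integrable_integral integrable_continuous_interval continuous_intros
        continuous_on_f_fun continuous_on_compose2[OF continuous_on_phi[of UNIV]]) auto
  then have "(h has_integral P_fun n k t) {t-2..t+2}"
    by (rule has_integral_on_superset) (use t in \<open>auto simp: h_def f_fun_eq_0\<close>)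
  then have "P_fun n k t = integral {-2..2} (\<lambda>x. h (x + t))"
    using integral_shift_real_ivl[of "t - 2" t "t + 2" h] by (simp add: integral_unique)
  also have "\<dots> = integral {-2..2} (\<lambda>x. f_fun n (t + x) * phi k x)"
    using phi_even[of k] by (simp add: h_def add.commute)
  also have "\<dots> = integral {0..2} (\<lambda>x. (f_fun n (t + x) + f_fun n (t - x)) * phi k x)"
    using n by (subst integral_symmetric_interval)
      (auto intro!: integrable_continuous_interval continuous_intros continuous_on_phi
        continuous_on_compose2[OF continuous_on_f_fun[of n UNIV]] simp: phi_even algebra_simps)
  finally show ?thesis .
qed

lemma abs_a_coeff_ge:
  assumes "n \<ge> 2" "k \<ge> 1"
  shows "1 / (2 * pi) * real k ^ 3 / 4 ^ k^2 \<le> \<bar>a_coeff n k\<bar>"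
proof -
  have half: "1 / 2 \<le> 1 - 1 / real n" using assms(1) by (simp add: field_simps)
  have "1 / (2 * pi) * real k ^ 3 / 4 ^ k^2 = real k / (2 * pi) * real (k^2) / 4 ^ k^2"
    by (simp add: power2_eq_square power3_eq_cube)
  also have "\<dots> \<le> c_const k * real (k^2) / 4 ^ k^2"
    using c_const_ge[OF assms(2)] by (intro divide_right_mono mult_right_mono) auto
  also have "\<dots> \<le> c_const k * real (k^2) / 4 ^ k^2 * (2 * (1 - 1 / real n))"
    using mult_left_mono[of 1 "2 * (1 - 1 / real n)" "c_const k * real (k^2) / 4 ^ k^2"]
      half c_const_pos[of k] by simp
  also have "\<dots> = \<bar>a_coeff n k\<bar>"
    using half c_const_pos[of k] by (simp add: a_coeff_def abs_mult)
  finally show ?thesis .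
qed

lemma higher_deriv_P_fun:
  assumes "n \<ge> 2" "k \<ge> 1"
  shows "(deriv ^^ (2 * k^2 - 1)) (P_fun n k) t = fact (2 * k^2 - 1) * a_coeff n k"
proof -
  have "P_fun n k = poly (P_poly n k)" using assms by (simp add: fun_eq_iff poly_P_poly)
  then show ?thesis
    using higher_deriv_poly_degree[of "P_poly n k" t] coeff_P_poly_top[OF assms] assms
    by (simp add: degree_P_poly)
qed

theorem lemma2:
  shows "(\<forall>n k. n \<ge> 2 \<and> k \<ge> 1 \<longrightarrow>
            (\<exists>p :: real poly. (\<forall>t. poly p t = P_fun n k t)
               \<and> (\<forall>t. poly p (-t) = - poly p t)
               \<and> degree p = 2 * k^2 - 1
               \<and> lead_coeff p = a_coeff n k))
       \<and> (\<exists>c > (0::real). \<forall>n k t. n \<ge> 2 \<and> k \<ge> 1 \<longrightarrow>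
            \<bar>(deriv ^^ (2 * k^2 - 1)) (P_fun n k) t\<bar>
              \<ge> c * fact (2 * k^2 - 1) * real k ^ 3 / 4 ^ (k^2))
       \<and> (\<forall>n k t. n \<ge> 2 \<and> k \<ge> 1 \<and> t \<in> {-1..1} \<longrightarrow>
            P_fun n k t = integral {0..2} (\<lambda>x. (f_fun n (t + x) + f_fun n (t - x)) * phi k x))"
proof (intro conjI)
  show "\<forall>n k. n \<ge> 2 \<and> k \<ge> 1 \<longrightarrow> (\<exists>p. (\<forall>t. poly p t = P_fun n k t)
      \<and> (\<forall>t. poly p (-t) = - poly p t) \<and> degree p = 2 * k^2 - 1 \<and> lead_coeff p = a_coeff n k)"
    by (metis poly_P_poly P_fun_odd degree_P_poly coeff_P_poly_top)
  have "\<bar>(deriv ^^ (2 * k^2 - 1)) (P_fun n k) t\<bar>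
      \<ge> 1 / (2 * pi) * fact (2 * k^2 - 1) * real k ^ 3 / 4 ^ k^2"
    if "n \<ge> 2" "k \<ge> 1" for n k t
    using mult_left_mono[OF abs_a_coeff_ge[OF that], of "fact (2 * k^2 - 1)"]
      higher_deriv_P_fun[OF that, of t]
    by (simp add: abs_mult mult_ac)
  then show "\<exists>c > 0. \<forall>n k t. n \<ge> 2 \<and> k \<ge> 1 \<longrightarrow>
      \<bar>(deriv ^^ (2 * k^2 - 1)) (P_fun n k) t\<bar> \<ge> c * fact (2 * k^2 - 1) * real k ^ 3 / 4 ^ k^2"
    by (intro exI[of _ "1 / (2 * pi)"]) auto
  show "\<forall>n k t. n \<ge> 2 \<and> k \<ge> 1 \<and> t \<in> {-1..1} \<longrightarrow>
      P_fun n k t = integral {0..2} (\<lambda>x. (f_fun n (t + x) + f_fun n (t - x)) * phi k x)"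
    using P_fun_symmetric_form by blast
qed

end
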